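(* Let $X$ be a compact complex manifold of complex dimension $n$ and let $g(t)$, $t\in[0,t_0]$, be a smooth family of Hermitian metrics on $X$ solving $$\partial_t g_{\bar kj}=-\tilde R_{\bar kj}-\tfrac12 T_{\bar kpq}\bar T_j{}^{pq}-\Phi(z,g(t))_{\bar kj}.$$ Let $\hat g=g(0)$ and $h^\alpha{}_\beta=\hat g^{\alpha\bar\gamma}g_{\bar\gamma\beta}$. Then $$(\partial_t-\Delta)\,\mathrm{Tr}\,h=-g^{q\bar p}(h^{-1})^\gamma{}_\mu\,\hat\nabla_q h^\mu{}_j\,\hat\nabla_{\bar p}h^j{}_\gamma-g^{q\bar p}\hat R_{\bar pq}{}^\alpha{}_j h^j{}_\alpha-\tfrac12\hat g^{j\bar k}T_{\bar kpq}\bar T_j{}^{pq}-\hat g^{j\bar k}\Phi_{\bar kj}.$$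
   Context: In local holomorphic coordinates a Hermitian metric is $\omega=i g_{\bar kj}dz^j\wedge d\bar z^k$ with inverse $g^{j\bar k}$. Its Chern connection $\nabla$ has Christoffel symbols $\Gamma^p_{jq}=g^{p\bar\alpha}\partial_j g_{\bar\alpha q}$, curvature $R_{\bar kj}{}^p{}_q=-\partial_{\bar k}\Gamma^p_{jq}$, second Chern–Ricci curvature $\tilde R_{\bar pq}=g_{\bar p\ell}g^{j\bar k}R_{\bar kj}{}^\ell{}_q$, and torsion $T^m{}_{jp}=g^{m\bar q}(\partial_jg_{\bar qp}-\partial_pg_{\bar qj})$; we set $T_{\bar kpq}=g_{\bar km}T^m{}_{pq}$ and $\bar T_j{}^{pq}=g^{p\bar a}g^{q\bar b}\overline{T_{\bar jab}}$. All these quantities in the flow are those of $g(t)$. $\Phi$ is a given smooth assignment of a real $(1,1)$-form $\Phi(z,g)$ (components $\Phi_{\bar kj}$) to each point $z\in X$ and each positive definite Hermitian form $g$ at $z$; in the formula $\Phi=\Phi(z,g(t))$. $\Delta=g^{p\bar q}\partial_p\partial_{\bar q}$ on functions (with $g=g(t)$). $\hat\nabla$ and $\hat R$ denote the Chern connection and Chern curvature of $\hat g$, with $\hat\nabla$ acting on the endomorphism $h$. *)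

theory Defs
  imports "HOL-Analysis.Analysis"
begin

coinductive smooth_on :: "'a::real_normed_vector set \<Rightarrow> ('a \<Rightarrow> 'b::real_normed_vector) \<Rightarrow> bool"
  where "(\<forall>x\<in>S. f differentiable (at x within S)) \<Longrightarrow>
         (\<forall>v. smooth_on S (\<lambda>x. frechet_derivative f (at x within S) v)) \<Longrightarrow> smooth_on S f"

text \<open>Matrices are indexed G \$ k \$ j = g_{bar k j}.\<close>
definition hermitian_mat :: "complex^'n^'n \<Rightarrow> bool" where
  "hermitian_mat A \<longleftrightarrow> (\<forall>k j. cnj (A $ k $ j) = A $ j $ k)"

definition pos_def_herm :: "complex^'n^'n \<Rightarrow> bool" where
  "pos_def_herm A \<longleftrightarrow> hermitian_mat A \<and>
     (\<forall>v::complex^'n. v \<noteq> 0 \<longrightarrow> 0 < Re (\<Sum>k\<in>UNIV. \<Sum>j\<in>UNIV. cnj (v $ k) * A $ k $ j * v $ j))"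

definition herm_part :: "complex^'n^'n \<Rightarrow> complex^'n^'n" where
  "herm_part A = (\<chi> k j. (A $ k $ j + cnj (A $ j $ k)) / 2)"

definition dpart :: "complex^'n \<Rightarrow> (complex^'n \<Rightarrow> complex) \<Rightarrow> complex^'n \<Rightarrow> complex" where
  "dpart v f z = vector_derivative (\<lambda>s::real. f (z + s *\<^sub>R v)) (at 0)"

definition wd :: "'n \<Rightarrow> (complex^'n \<Rightarrow> complex) \<Rightarrow> complex^'n \<Rightarrow> complex" where
  "wd j f z = (dpart (axis j 1) f z - \<i> * dpart (axis j \<i>) f z) / 2"

definition wdb :: "'n \<Rightarrow> (complex^'n \<Rightarrow> complex) \<Rightarrow> complex^'n \<Rightarrow> complex" where
  "wdb k f z = (dpart (axis k 1) f z + \<i> * dpart (axis k \<i>) f z) / 2"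

text \<open>Geometric quantities of a Hermitian metric G (a function of z).
  ginv G z \$ j \$ k = g^{j bar k}.\<close>
definition ginv :: "(complex^'n \<Rightarrow> complex^'n^'n) \<Rightarrow> complex^'n \<Rightarrow> complex^'n^'n" where
  "ginv G z = matrix_inv (G z)"

text \<open>Christoffel symbols Gamma^p_{jq} = g^{p bar a} d_j g_{bar a q}.\<close>
definition chr :: "(complex^'n \<Rightarrow> complex^'n^'n) \<Rightarrow> 'n \<Rightarrow> 'n \<Rightarrow> 'n \<Rightarrow> complex^'n \<Rightarrow> complex" where
  "chr G p j q z = (\<Sum>a\<in>UNIV. ginv G z $ p $ a * wd j (\<lambda>w. G w $ a $ q) z)"

text \<open>Chern curvature R_{bar k j}^p_q = - d_{bar k} Gamma^p_{jq}.\<close>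
definition curv :: "(complex^'n \<Rightarrow> complex^'n^'n) \<Rightarrow> 'n \<Rightarrow> 'n \<Rightarrow> 'n \<Rightarrow> 'n \<Rightarrow> complex^'n \<Rightarrow> complex" where
  "curv G k j p q z = - wdb k (\<lambda>w. chr G p j q w) z"

text \<open>Second Chern-Ricci curvature tilde R_{bar p q} = g_{bar p l} g^{j bar k} R_{bar k j}^l_q.\<close>
definition ricci2 :: "(complex^'n \<Rightarrow> complex^'n^'n) \<Rightarrow> 'n \<Rightarrow> 'n \<Rightarrow> complex^'n \<Rightarrow> complex" where
  "ricci2 G p q z = (\<Sum>l\<in>UNIV. \<Sum>j\<in>UNIV. \<Sum>k\<in>UNIV.
      G z $ p $ l * ginv G z $ j $ k * curv G k j l q z)"

text \<open>Torsion T^m_{jp} = g^{m bar q}(d_j g_{bar q p} - d_p g_{bar q j}).\<close>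
definition torsion_up :: "(complex^'n \<Rightarrow> complex^'n^'n) \<Rightarrow> 'n \<Rightarrow> 'n \<Rightarrow> 'n \<Rightarrow> complex^'n \<Rightarrow> complex" where
  "torsion_up G m j p z = (\<Sum>q\<in>UNIV. ginv G z $ m $ q *
      (wd j (\<lambda>w. G w $ q $ p) z - wd p (\<lambda>w. G w $ q $ j) z))"

text \<open>T_{bar k p q} = g_{bar k m} T^m_{pq}.\<close>
definition torsion_low :: "(complex^'n \<Rightarrow> complex^'n^'n) \<Rightarrow> 'n \<Rightarrow> 'n \<Rightarrow> 'n \<Rightarrow> complex^'n \<Rightarrow> complex" where
  "torsion_low G k p q z = (\<Sum>m\<in>UNIV. G z $ k $ m * torsion_up G m p q z)"

text \<open>bar T_j^{pq} = g^{p bar a} g^{q bar b} conj(T_{bar j a b}).\<close>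
definition torsion_bar_up :: "(complex^'n \<Rightarrow> complex^'n^'n) \<Rightarrow> 'n \<Rightarrow> 'n \<Rightarrow> 'n \<Rightarrow> complex^'n \<Rightarrow> complex" where
  "torsion_bar_up G j p q z = (\<Sum>a\<in>UNIV. \<Sum>b\<in>UNIV.
      ginv G z $ p $ a * ginv G z $ q $ b * cnj (torsion_low G j a b z))"

definition TT :: "(complex^'n \<Rightarrow> complex^'n^'n) \<Rightarrow> 'n \<Rightarrow> 'n \<Rightarrow> complex^'n \<Rightarrow> complex" where
  "TT G k j z = (\<Sum>p\<in>UNIV. \<Sum>q\<in>UNIV. torsion_low G k p q z * torsion_bar_up G j p q z)"

definition lap :: "(complex^'n \<Rightarrow> complex^'n^'n) \<Rightarrow> (complex^'n \<Rightarrow> complex) \<Rightarrow> complex^'n \<Rightarrow> complex" where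
  "lap G f z = (\<Sum>p\<in>UNIV. \<Sum>q\<in>UNIV. ginv G z $ p $ q * wd p (\<lambda>w. wdb q f w) z)"

text \<open>Chern connection of Ghat acting on an endomorphism H (H \$ mu \$ j = h^mu_j):
  (1,0) part nabla_q h^mu_j = d_q h^mu_j + Gamma^mu_{qr} h^r_j - Gamma^r_{qj} h^mu_r,
  (0,1) part nabla_{bar p} h^j_g = d_{bar p} h^j_g.\<close>
definition nabla_end :: "(complex^'n \<Rightarrow> complex^'n^'n) \<Rightarrow> (complex^'n \<Rightarrow> complex^'n^'n)
    \<Rightarrow> 'n \<Rightarrow> 'n \<Rightarrow> 'n \<Rightarrow> complex^'n \<Rightarrow> complex" where
  "nabla_end Gh H q mu j z = wd q (\<lambda>w. H w $ mu $ j) z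
      + (\<Sum>r\<in>UNIV. chr Gh mu q r z * H z $ r $ j)
      - (\<Sum>r\<in>UNIV. chr Gh r q j z * H z $ mu $ r)"

definition nablabar_end :: "(complex^'n \<Rightarrow> complex^'n^'n)
    \<Rightarrow> 'n \<Rightarrow> 'n \<Rightarrow> 'n \<Rightarrow> complex^'n \<Rightarrow> complex" where
  "nablabar_end H p j g z = wdb p (\<lambda>w. H w $ j $ g) z"

end

theory Submission
  imports Defs
begin

text \<open>Put \<open>A = g(0)\<close>, \<open>G = g(t)\<close> and \<open>h = A\<inverse> G\<close>, and write \<open>\<partial>\<^sub>q\<close>, \<open>\<partial>'\<^sub>p\<close> for the
  holomorphic and antiholomorphic derivatives. As \<open>A\<close> does not depend on \<open>t\<close>,
  \<open>\<partial>\<^sub>t tr h = A\<^sup>j\<^sup>k \<partial>\<^sub>t G\<^sub>k\<^sub>j\<close>, and the flow equation reduces the claim to a pointwise identity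
  in the first and second derivatives of \<open>A\<close> and \<open>G\<close>. With the Chern curvature
  \<open>\<Theta>\<^sub>M = - \<partial>'\<^sub>p (M\<inverse> \<partial>\<^sub>q M)\<close> and \<open>\<nabla>\<^sub>q h = A\<inverse> \<partial>\<^sub>q G - h A\<inverse> \<partial>\<^sub>q A\<close>, it states for every
  pair of directions \<open>q, p\<close> that
  \<open>tr (h \<Theta>\<^sub>G) + tr (\<partial>\<^sub>q \<partial>'\<^sub>p h) = tr (h\<inverse> \<nabla>\<^sub>q h \<partial>'\<^sub>p h) + tr (\<Theta>\<^sub>A h)\<close>,
  and contracting with \<open>G\<^sup>q\<^sup>p\<close> gives the theorem. The identity itself follows from the product
  rule, \<open>\<partial>(M\<inverse>) = - M\<inverse> (\<partial>M) M\<inverse>\<close>, the symmetry of mixed second derivatives and cyclicity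
  of the trace.\<close>

section \<open>Symmetry of mixed partial derivatives\<close>

lemma has_vector_derivative_along_line:
  fixes f :: "'a::real_normed_vector \<Rightarrow> 'b::real_normed_vector"
  assumes "(f has_derivative Df) (at (z + s *\<^sub>R u))"
  shows "((\<lambda>s. f (z + s *\<^sub>R u)) has_vector_derivative Df u) (at s)"
proof -
  have "((\<lambda>s. z + s *\<^sub>R u) has_derivative (\<lambda>s. s *\<^sub>R u)) (at s)"
    by (auto intro!: derivative_eq_intros)
  from diff_chain_at[OF this assms]
  have "((\<lambda>s. f (z + s *\<^sub>R u)) has_derivative (\<lambda>s. Df (s *\<^sub>R u))) (at s)"
    by (simp add: o_def)
  then show ?thesis
    unfolding has_vector_derivative_def
    using linear_scale[OF has_derivative_linear[OF assms]] by simp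
qed

lemma dpart_eq_derivative:
  assumes "(f has_derivative Df) (at z)"
  shows "dpart v f z = Df v"
  unfolding dpart_def
  by (rule vector_derivative_at, rule has_vector_derivative_along_line) (use assms in simp)

lemma second_difference_mean_value:
  fixes f :: "'a::real_normed_vector \<Rightarrow> real"
  assumes h: "0 < h"
    and square: "\<And>a b. 0 \<le> a \<Longrightarrow> a \<le> h \<Longrightarrow> 0 \<le> b \<Longrightarrow> b \<le> h \<Longrightarrow> z + a *\<^sub>R u + b *\<^sub>R v \<in> U"
    and Df: "\<And>w. w \<in> U \<Longrightarrow> (f has_derivative Df w) (at w)"
    and Du: "\<And>w. w \<in> U \<Longrightarrow> ((\<lambda>w. Df w u) has_derivative Du w) (at w)"
  obtains a b where "0 \<le> a" "a \<le> h" "0 \<le> b" "b \<le> h"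
    "f (z + h *\<^sub>R u + h *\<^sub>R v) - f (z + h *\<^sub>R u) - f (z + h *\<^sub>R v) + f z
       = h * h * Du (z + a *\<^sub>R u + b *\<^sub>R v) v"
proof -
  define \<psi> where "\<psi> s = f (z + s *\<^sub>R u + h *\<^sub>R v) - f (z + s *\<^sub>R u)" for s
  have "DERIV \<psi> s :> Df (z + s *\<^sub>R u + h *\<^sub>R v) u - Df (z + s *\<^sub>R u) u"
    if "0 \<le> s" "s \<le> h" for s
  proof -
    have "((\<lambda>s. f ((z + h *\<^sub>R v) + s *\<^sub>R u)) has_vector_derivative Df (z + s *\<^sub>R u + h *\<^sub>R v) u) (at s)"
      by (rule has_vector_derivative_along_line)
         (use Df[OF square[of s h]] that h in \<open>simp add: algebra_simps\<close>)
    moreover have "((\<lambda>s. f (z + s *\<^sub>R u)) has_vector_derivative Df (z + s *\<^sub>R u) u) (at s)"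
      by (rule has_vector_derivative_along_line) (use Df[OF square[of s 0]] that h in simp)
    ultimately show ?thesis
      unfolding \<psi>_def has_real_derivative_iff_has_vector_derivative
      by (auto dest: has_vector_derivative_diff simp: algebra_simps)
  qed
  from MVT2[OF h this] obtain a where a: "0 < a" "a < h"
    "\<psi> h - \<psi> 0 = h * (Df (z + a *\<^sub>R u + h *\<^sub>R v) u - Df (z + a *\<^sub>R u) u)"
    by auto
  have "DERIV (\<lambda>b. Df (z + a *\<^sub>R u + b *\<^sub>R v) u) b :> Du (z + a *\<^sub>R u + b *\<^sub>R v) v"
    if "0 \<le> b" "b \<le> h" for b
    unfolding has_real_derivative_iff_has_vector_derivative
    by (rule has_vector_derivative_along_line[where f = "\<lambda>w. Df w u"])
       (use Du square that a in simp)
  from MVT2[OF h this] obtain b where "0 < b" "b < h"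
    "Df (z + a *\<^sub>R u + h *\<^sub>R v) u - Df (z + a *\<^sub>R u + 0 *\<^sub>R v) u = h * Du (z + a *\<^sub>R u + b *\<^sub>R v) v"
    by auto
  with a show ?thesis
    by (intro that[of a b]) (auto simp: \<psi>_def algebra_simps)
qed

lemma small_square_in_ball:
  fixes z u v :: "'a::real_normed_vector"
  assumes "0 < m"
  obtains h where "0 < h"
    "\<And>a b. 0 \<le> a \<Longrightarrow> a \<le> h \<Longrightarrow> 0 \<le> b \<Longrightarrow> b \<le> h \<Longrightarrow> z + a *\<^sub>R u + b *\<^sub>R v \<in> ball z m"
proof -
  define c where "c = 2 * (norm u + norm v + 1)"
  have "c > 0" by (simp add: c_def add_nonneg_pos)
  define h where "h = m / c"
  have "h > 0" using assms \<open>c > 0\<close> by (simp add: h_def)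
  have "z + a *\<^sub>R u + b *\<^sub>R v \<in> ball z m" if "0 \<le> a" "a \<le> h" "0 \<le> b" "b \<le> h" for a b
  proof -
    have "norm (a *\<^sub>R u + b *\<^sub>R v) \<le> h * norm u + h * norm v"
      using that norm_triangle_ineq[of "a *\<^sub>R u" "b *\<^sub>R v"]
        mult_right_mono[of a h "norm u"] mult_right_mono[of b h "norm v"] by simp
    also have "\<dots> < h * c"
      using \<open>h > 0\<close> by (simp add: c_def algebra_simps add_nonneg_pos)
    also have "\<dots> = m"
      using \<open>c > 0\<close> by (simp add: h_def)
    finally show ?thesis
      by (metis add.assoc add_diff_cancel_left' dist_commute dist_norm mem_ball)
  qed
  with \<open>h > 0\<close> show thesis by (rule that)
qed

lemma mixed_derivatives_symmetric_real:
  fixes f :: "'a::real_normed_vector \<Rightarrow> real"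
  assumes U: "open U" "z \<in> U"
    and Df: "\<And>w. w \<in> U \<Longrightarrow> (f has_derivative Df w) (at w)"
    and Du: "\<And>w. w \<in> U \<Longrightarrow> ((\<lambda>w. Df w u) has_derivative Du w) (at w)"
    and Dv: "\<And>w. w \<in> U \<Longrightarrow> ((\<lambda>w. Df w v) has_derivative Dv w) (at w)"
    and cont_u: "continuous_on U (\<lambda>w. Du w v)"
    and cont_v: "continuous_on U (\<lambda>w. Dv w u)"
  shows "Du z v = Dv z u"
proof (rule ccontr)
  assume "Du z v \<noteq> Dv z u"
  define e where "e = \<bar>Du z v - Dv z u\<bar> / 2"
  have "e > 0" using \<open>Du z v \<noteq> Dv z u\<close> by (simp add: e_def)
  obtain r where "r > 0" "ball z r \<subseteq> U" using U openE by blast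
  obtain d1 where "d1 > 0" "(\<lambda>w. Du w v) ` ball z d1 \<subseteq> ball (Du z v) e"
    using cont_u U \<open>e > 0\<close> continuous_on_eq_continuous_at continuous_at_ball by metis
  obtain d2 where "d2 > 0" "(\<lambda>w. Dv w u) ` ball z d2 \<subseteq> ball (Dv z u) e"
    using cont_v U \<open>e > 0\<close> continuous_on_eq_continuous_at continuous_at_ball by metis
  define m where "m = min r (min d1 d2)"
  have "m > 0" using \<open>r > 0\<close> \<open>d1 > 0\<close> \<open>d2 > 0\<close> by (simp add: m_def)
  then obtain h where "h > 0" and square:
    "\<And>a b. 0 \<le> a \<Longrightarrow> a \<le> h \<Longrightarrow> 0 \<le> b \<Longrightarrow> b \<le> h \<Longrightarrow> z + a *\<^sub>R u + b *\<^sub>R v \<in> ball z m"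
    by (rule small_square_in_ball[where z = z and u = u and v = v]) blast
  have square_uv: "z + a *\<^sub>R u + b *\<^sub>R v \<in> U" if "0 \<le> a" "a \<le> h" "0 \<le> b" "b \<le> h" for a b
    using square[OF that] \<open>ball z r \<subseteq> U\<close> by (auto simp: m_def)
  have square_vu: "z + a *\<^sub>R v + b *\<^sub>R u \<in> U" if "0 \<le> a" "a \<le> h" "0 \<le> b" "b \<le> h" for a b
    using square_uv[OF that(3,4,1,2)] by (simp add: algebra_simps)
  \<comment> \<open>The second difference over the square is \<open>h\<^sup>2\<close> times either mixed derivative at
    some point of the square, and both are \<open>e\<close>-close to their values at \<open>z\<close>.\<close>
  obtain a1 b1 where ab1: "0 \<le> a1" "a1 \<le> h" "0 \<le> b1" "b1 \<le> h"
    "f (z + h *\<^sub>R u + h *\<^sub>R v) - f (z + h *\<^sub>R u) - f (z + h *\<^sub>R v) + f z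
       = h * h * Du (z + a1 *\<^sub>R u + b1 *\<^sub>R v) v"
    by (rule second_difference_mean_value[OF \<open>h > 0\<close> square_uv Df Du])
  obtain a2 b2 where ab2: "0 \<le> a2" "a2 \<le> h" "0 \<le> b2" "b2 \<le> h"
    "f (z + h *\<^sub>R v + h *\<^sub>R u) - f (z + h *\<^sub>R v) - f (z + h *\<^sub>R u) + f z
       = h * h * Dv (z + a2 *\<^sub>R v + b2 *\<^sub>R u) u"
    by (rule second_difference_mean_value[OF \<open>h > 0\<close> square_vu Df Dv])
  have "Du (z + a1 *\<^sub>R u + b1 *\<^sub>R v) v = Dv (z + b2 *\<^sub>R u + a2 *\<^sub>R v) u"
    using ab1(5) ab2(5) \<open>h > 0\<close> by (simp add: algebra_simps)
  moreover have "Du (z + a1 *\<^sub>R u + b1 *\<^sub>R v) v \<in> ball (Du z v) e"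
    using square[OF ab1(1-4)] \<open>(\<lambda>w. Du w v) ` ball z d1 \<subseteq> _\<close> by (force simp: m_def)
  moreover have "Dv (z + b2 *\<^sub>R u + a2 *\<^sub>R v) u \<in> ball (Dv z u) e"
    using square[OF ab2(3,4,1,2)] \<open>(\<lambda>w. Dv w u) ` ball z d2 \<subseteq> _\<close> by (force simp: m_def)
  ultimately have "dist (Du z v) (Dv z u) < e + e"
    using dist_triangle2[of "Du z v" "Dv z u" "Du (z + a1 *\<^sub>R u + b1 *\<^sub>R v) v"] by auto
  then show False
    by (simp add: e_def dist_real_def)
qed

lemma mixed_derivatives_symmetric:
  fixes f :: "'a::real_normed_vector \<Rightarrow> complex"
  assumes U: "open U" "z \<in> U"
    and Df: "\<And>w. w \<in> U \<Longrightarrow> (f has_derivative Df w) (at w)"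
    and Du: "\<And>w. w \<in> U \<Longrightarrow> ((\<lambda>w. Df w u) has_derivative Du w) (at w)"
    and Dv: "\<And>w. w \<in> U \<Longrightarrow> ((\<lambda>w. Df w v) has_derivative Dv w) (at w)"
    and cont_u: "continuous_on U (\<lambda>w. Du w v)"
    and cont_v: "continuous_on U (\<lambda>w. Dv w u)"
  shows "Du z v = Dv z u"
proof (rule complex_eqI)
  show "Re (Du z v) = Re (Dv z u)"
    by (rule mixed_derivatives_symmetric_real[where f = "\<lambda>w. Re (f w)" and Df = "\<lambda>w h. Re (Df w h)"
          and Du = "\<lambda>w h. Re (Du w h)" and Dv = "\<lambda>w h. Re (Dv w h)", OF U])
      (use Df Du Dv cont_u cont_v in \<open>auto intro!: has_derivative_Re continuous_intros\<close>)
  show "Im (Du z v) = Im (Dv z u)"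
    by (rule mixed_derivatives_symmetric_real[where f = "\<lambda>w. Im (f w)" and Df = "\<lambda>w h. Im (Df w h)"
          and Du = "\<lambda>w h. Im (Du w h)" and Dv = "\<lambda>w h. Im (Dv w h)", OF U])
      (use Df Du Dv cont_u cont_v in \<open>auto intro!: has_derivative_Im continuous_intros\<close>)
qed

definition C2_on :: "'a::real_normed_vector set \<Rightarrow> ('a \<Rightarrow> complex) \<Rightarrow> bool" where
  "C2_on U f \<longleftrightarrow> (\<exists>Df D2. (\<forall>w\<in>U. (f has_derivative Df w) (at w)) \<and>
     (\<forall>w\<in>U. \<forall>u. ((\<lambda>w. Df w u) has_derivative D2 w u) (at w)) \<and>
     (\<forall>u v. continuous_on U (\<lambda>w. D2 w u v)))"

lemma C2_onE:
  assumes "C2_on U f" "open U"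
  obtains Df D2 where "\<And>w. w \<in> U \<Longrightarrow> (f has_derivative Df w) (at w)"
    "\<And>w u. w \<in> U \<Longrightarrow> ((\<lambda>w. Df w u) has_derivative D2 w u) (at w)"
    "\<And>w u v. w \<in> U \<Longrightarrow> D2 w u v = D2 w v u"
proof -
  obtain Df D2 where D: "\<forall>w\<in>U. (f has_derivative Df w) (at w)"
    "\<forall>w\<in>U. \<forall>u. ((\<lambda>w. Df w u) has_derivative D2 w u) (at w)"
    "\<forall>u v. continuous_on U (\<lambda>w. D2 w u v)"
    using assms(1) unfolding C2_on_def by blast
  have "D2 w u v = D2 w v u" if "w \<in> U" for w u v
    by (rule mixed_derivatives_symmetric[OF assms(2) that, where f = f and Df = Df
          and Du = "\<lambda>w. D2 w u" and Dv = "\<lambda>w. D2 w v"])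
       (use D in simp_all)
  with D show thesis by (intro that[of Df D2]) auto
qed

section \<open>Wirtinger derivatives\<close>

text \<open>\<open>wd j\<close> and \<open>wdb j\<close> are the instances \<open>a = e\<^sub>j\<close>, \<open>b = i e\<^sub>j\<close>, \<open>c = \<mp>i\<close>;
  the calculus is developed once for both.\<close>

definition wirtinger ::
    "complex^'n \<Rightarrow> complex^'n \<Rightarrow> complex \<Rightarrow> (complex^'n \<Rightarrow> complex) \<Rightarrow> complex^'n \<Rightarrow> complex"
  where "wirtinger a b c f z = (dpart a f z + c * dpart b f z) / 2"

lemma wd_eq_wirtinger: "wd j = wirtinger (axis j 1) (axis j \<i>) (- \<i>)"
  by (intro ext) (simp add: wd_def wirtinger_def)

lemma wdb_eq_wirtinger: "wdb j = wirtinger (axis j 1) (axis j \<i>) \<i>"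
  by (intro ext) (simp add: wdb_def wirtinger_def)

lemma wirtinger_eq_derivative:
  assumes "(f has_derivative Df) (at z)"
  shows "wirtinger a b c f z = (Df a + c * Df b) / 2"
  by (simp add: wirtinger_def dpart_eq_derivative[OF assms])

lemma wirtinger_cong:
  assumes "open U" "z \<in> U" "\<And>w. w \<in> U \<Longrightarrow> f w = g w"
  shows "wirtinger a b c f z = wirtinger a b c g z"
proof -
  have "dpart v f z = dpart v g z" for v
  proof -
    have "open ((\<lambda>s. z + s *\<^sub>R v) -` U)"
      using assms(1) by (intro continuous_open_vimage allI continuous_intros)
    then have "eventually (\<lambda>s. f (z + s *\<^sub>R v) = g (z + s *\<^sub>R v)) (nhds 0)"
      unfolding eventually_nhds using assms(2,3) by force
    then show ?thesis
      unfolding dpart_def by (intro vector_derivative_cong_eq) (auto elim: eventually_mono)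
  qed
  then show ?thesis by (simp add: wirtinger_def)
qed

lemma wirtinger_const: "wirtinger a b c (\<lambda>w. k) z = 0"
  by (simp add: wirtinger_eq_derivative[OF has_derivative_const])

lemma wirtinger_diff:
  assumes "f differentiable (at z)" "g differentiable (at z)"
  shows "wirtinger a b c (\<lambda>w. f w - g w) z = wirtinger a b c f z - wirtinger a b c g z"
proof -
  obtain f' g' where "(f has_derivative f') (at z)" "(g has_derivative g') (at z)"
    using assms unfolding differentiable_def by blast
  then show ?thesis
    by (simp add: wirtinger_eq_derivative[OF has_derivative_diff] wirtinger_eq_derivative field_simps)
qed

lemma wirtinger_mult:
  assumes "f differentiable (at z)" "g differentiable (at z)"
  shows "wirtinger a b c (\<lambda>w. f w * g w) z = wirtinger a b c f z * g z + f z * wirtinger a b c g z"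
proof -
  obtain f' g' where "(f has_derivative f') (at z)" "(g has_derivative g') (at z)"
    using assms unfolding differentiable_def by blast
  then show ?thesis
    by (simp add: wirtinger_eq_derivative[OF has_derivative_mult] wirtinger_eq_derivative field_simps)
qed

lemma wirtinger_sum:
  assumes "finite I" "\<And>i. i \<in> I \<Longrightarrow> f i differentiable (at z)"
  shows "wirtinger a b c (\<lambda>w. \<Sum>i\<in>I. f i w) z = (\<Sum>i\<in>I. wirtinger a b c (f i) z)"
proof -
  obtain D where D: "\<And>i. i \<in> I \<Longrightarrow> (f i has_derivative D i) (at z)"
    using assms(2) unfolding differentiable_def by metis
  have "((\<lambda>w. \<Sum>i\<in>I. f i w) has_derivative (\<lambda>x. \<Sum>i\<in>I. D i x)) (at z)"
    by (rule has_derivative_sum) (use D in simp)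
  then have "wirtinger a b c (\<lambda>w. \<Sum>i\<in>I. f i w) z = (\<Sum>i\<in>I. D i a + c * D i b) / 2"
    by (simp add: wirtinger_eq_derivative sum.distrib sum_distrib_left)
  also have "\<dots> = (\<Sum>i\<in>I. wirtinger a b c (f i) z)"
    unfolding sum_divide_distrib by (rule sum.cong) (simp_all add: wirtinger_eq_derivative[OF D])
  finally show ?thesis .
qed

lemma wirtinger_has_derivative_C2:
  assumes "open U" "w \<in> U"
    and Df: "\<And>w. w \<in> U \<Longrightarrow> (f has_derivative Df w) (at w)"
    and D2: "\<And>w u. w \<in> U \<Longrightarrow> ((\<lambda>w. Df w u) has_derivative D2 w u) (at w)"
  shows "((\<lambda>w. wirtinger a b c f w) has_derivative (\<lambda>x. (D2 w a x + c * D2 w b x) / 2)) (at w)"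
proof (rule has_derivative_transform_within_open[OF _ assms(1,2)])
  show "((\<lambda>w. (Df w a + c * Df w b) / 2) has_derivative (\<lambda>x. (D2 w a x + c * D2 w b x) / 2)) (at w)"
    using D2[OF assms(2)] by (auto intro!: derivative_eq_intros)
  show "(Df w' a + c * Df w' b) / 2 = wirtinger a b c f w'" if "w' \<in> U" for w'
    by (simp add: wirtinger_eq_derivative[OF Df[OF that]])
qed

lemma wirtinger_differentiable:
  assumes "C2_on U f" "open U" "w \<in> U"
  shows "(\<lambda>w. wirtinger a b c f w) differentiable (at w)"
proof -
  obtain Df D2 where "\<And>w. w \<in> U \<Longrightarrow> (f has_derivative Df w) (at w)"
    and "\<And>w u. w \<in> U \<Longrightarrow> ((\<lambda>w. Df w u) has_derivative D2 w u) (at w)"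
    by (rule C2_onE[OF assms(1,2)]) blast
  from wirtinger_has_derivative_C2[OF assms(2,3) this] show ?thesis
    by (rule differentiableI)
qed

lemma wirtinger_commute:
  assumes "C2_on U f" "open U" "z \<in> U"
  shows "wirtinger a b c (\<lambda>w. wirtinger a' b' c' f w) z = wirtinger a' b' c' (\<lambda>w. wirtinger a b c f w) z"
proof -
  obtain Df D2 where Df: "\<And>w. w \<in> U \<Longrightarrow> (f has_derivative Df w) (at w)"
    and D2: "\<And>w u. w \<in> U \<Longrightarrow> ((\<lambda>w. Df w u) has_derivative D2 w u) (at w)"
    and sym: "\<And>w u v. w \<in> U \<Longrightarrow> D2 w u v = D2 w v u"
    by (rule C2_onE[OF assms(1,2)]) blast
  show ?thesis
    using sym[OF assms(3)]
    by (simp add: wirtinger_eq_derivative[OF wirtinger_has_derivative_C2[OF assms(2,3) Df D2]]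
        field_simps)
qed

section \<open>Matrix-valued functions\<close>

lemma matrix_mul_entry: "(A ** B) $ i $ j = (\<Sum>k\<in>UNIV. A $ i $ k * B $ k $ j)"
  by (simp add: matrix_matrix_mult_def)

lemma matrix_add_rdistrib: "((A::'a::semiring_1^'n^'m) + B) ** C = A ** C + B ** C"
  by (simp add: vec_eq_iff matrix_mul_entry distrib_right sum.distrib)

lemma matrix_diff_ldistrib: "(A::'a::ring_1^'n^'m) ** (B - C) = A ** B - A ** C"
  by (simp add: vec_eq_iff matrix_mul_entry right_diff_distrib sum_subtractf)

lemma matrix_diff_rdistrib: "((A::'a::ring_1^'n^'m) - B) ** C = A ** C - B ** C"
  by (simp add: vec_eq_iff matrix_mul_entry left_diff_distrib sum_subtractf)

lemma matrix_mul_minus_left: "(- (A::'a::ring_1^'n^'m)) ** B = - (A ** B)"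
  by (simp add: vec_eq_iff matrix_mul_entry sum_negf)

lemma matrix_mul_minus_right: "(A::'a::ring_1^'n^'m) ** (- B) = - (A ** B)"
  by (simp add: vec_eq_iff matrix_mul_entry sum_negf)

lemma trace_matrix_mul: "trace (A ** B) = (\<Sum>i\<in>UNIV. \<Sum>j\<in>UNIV. A $ i $ j * B $ j $ i)"
  by (simp add: trace_def matrix_mul_entry)

lemma trace_matrix_mul3:
  "trace (A ** B ** C) = (\<Sum>i\<in>UNIV. \<Sum>j\<in>UNIV. \<Sum>k\<in>UNIV. A $ i $ j * B $ j $ k * C $ k $ i)"
  unfolding trace_def matrix_mul_entry sum_distrib_right
  by (intro sum.cong refl sum.swap)

lemma matrix_inv_right: "invertible A \<Longrightarrow> A ** matrix_inv A = mat 1"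
  and matrix_inv_left: "invertible A \<Longrightarrow> matrix_inv A ** A = mat 1"
  for A :: "'a::field^'n^'n"
  using someI_ex[of "\<lambda>A'. A ** A' = mat 1 \<and> A' ** A = mat 1"]
  unfolding invertible_def matrix_inv_def by auto

lemma matrix_inv_unique:
  fixes A B :: "'a::field^'n^'n"
  assumes "A ** B = mat 1"
  shows "matrix_inv A = B"
proof -
  have "invertible A" using assms invertible_right_inverse by blast
  then have "B = (matrix_inv A ** A) ** B" by (simp add: matrix_inv_left)
  also have "\<dots> = matrix_inv A" by (simp add: matrix_mul_assoc[symmetric] assms)
  finally show ?thesis by simp
qed

lemma matrix_inv_cramer:
  fixes A :: "'a::field^'n^'n"
  assumes "det A \<noteq> 0"
  shows "matrix_inv A = (\<chi> k j. det (\<chi> i l. if l = k then axis j 1 $ i else A $ i $ l) / det A)"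
proof -
  have inv: "invertible A" using assms invertible_det_nz by blast
  have "matrix_inv A $ k $ j = det (\<chi> i l. if l = k then axis j 1 $ i else A $ i $ l) / det A" for k j
  proof -
    have "A *v (matrix_inv A *v axis j 1) = axis j 1"
      by (simp add: matrix_vector_mul_assoc matrix_inv_right[OF inv])
    then have "matrix_inv A *v axis j 1 = (\<chi> k. det (\<chi> i l. if l = k then axis j 1 $ i else A $ i $ l) / det A)"
      using cramer[OF assms] by blast
    moreover have "(matrix_inv A *v axis j 1) $ k = matrix_inv A $ k $ j"
      by (simp add: matrix_vector_mult_def axis_def if_distrib cong: if_cong)
    ultimately show ?thesis by simp
  qed
  then show ?thesis by (simp add: vec_eq_iff)
qed

definition mat_differentiable :: "('a::real_normed_vector \<Rightarrow> 'b::real_normed_field^'n^'m) \<Rightarrow> 'a \<Rightarrow> bool"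
  where "mat_differentiable M z \<longleftrightarrow> (\<forall>i j. (\<lambda>w. M w $ i $ j) differentiable (at z))"

lemma mat_differentiable_diff:
  "mat_differentiable M z \<Longrightarrow> mat_differentiable N z \<Longrightarrow> mat_differentiable (\<lambda>w. M w - N w) z"
  by (simp add: mat_differentiable_def)

lemma mat_differentiable_mult:
  "mat_differentiable M z \<Longrightarrow> mat_differentiable N z \<Longrightarrow> mat_differentiable (\<lambda>w. M w ** N w) z"
  by (simp add: mat_differentiable_def matrix_mul_entry)

lemma differentiable_prod:
  fixes f :: "'i \<Rightarrow> 'a::real_normed_vector \<Rightarrow> 'b::real_normed_field"
  assumes "\<And>i. i \<in> I \<Longrightarrow> f i differentiable (at z)"
  shows "(\<lambda>w. \<Prod>i\<in>I. f i w) differentiable (at z)"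
  using assms by (induction I rule: infinite_finite_induct) auto

lemma differentiable_det:
  "mat_differentiable M z \<Longrightarrow> (\<lambda>w. det (M w)) differentiable (at z)"
  unfolding det_def mat_differentiable_def by (auto intro!: differentiable_sum differentiable_prod)

lemma mat_differentiable_cong:
  assumes "open U" "z \<in> U" "\<And>w. w \<in> U \<Longrightarrow> M w = N w" "mat_differentiable M z"
  shows "mat_differentiable N z"
  unfolding mat_differentiable_def
proof (intro allI)
  fix i j
  obtain D where "((\<lambda>w. M w $ i $ j) has_derivative D) (at z)"
    using assms(4) unfolding mat_differentiable_def differentiable_def by blast
  then have "((\<lambda>w. N w $ i $ j) has_derivative D) (at z)"
    by (rule has_derivative_transform_within_open[OF _ assms(1,2)]) (use assms(3) in simp)
  then show "(\<lambda>w. N w $ i $ j) differentiable (at z)"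
    by (rule differentiableI)
qed

lemma mat_differentiable_inverse:
  fixes M :: "'a::real_normed_vector \<Rightarrow> 'b::real_normed_field^'n^'n"
  assumes "open U" "z \<in> U" "\<And>w. w \<in> U \<Longrightarrow> invertible (M w)" "mat_differentiable M z"
  shows "mat_differentiable (\<lambda>w. matrix_inv (M w)) z"
proof (rule mat_differentiable_cong[OF assms(1,2)])
  define C where "C k j w = (\<chi> i l. if l = k then axis j 1 $ i else M w $ i $ l)" for k j w
  show "(\<chi> k j. det (C k j w) / det (M w)) = matrix_inv (M w)" if "w \<in> U" for w
    using assms(3)[OF that] by (simp add: C_def matrix_inv_cramer invertible_det_nz)
  have "mat_differentiable (C k j) z" for k j
    unfolding mat_differentiable_def C_def
  proof (intro allI)
    show "(\<lambda>w. (\<chi> i l. if l = k then axis j 1 $ i else M w $ i $ l) $ i $ l) differentiable (at z)" for i l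
      using assms(4) by (cases "l = k") (simp_all add: mat_differentiable_def)
  qed
  then have "(\<lambda>w. det (C k j w)) differentiable (at z)" for k j
    by (rule differentiable_det)
  moreover have "(\<lambda>w. det (M w)) differentiable (at z)"
    using assms(4) by (rule differentiable_det)
  moreover have "det (M z) \<noteq> 0"
    using assms(2,3) invertible_det_nz by blast
  ultimately show "mat_differentiable (\<lambda>w. \<chi> k j. det (C k j w) / det (M w)) z"
    by (simp add: mat_differentiable_def)
qed

definition wirtinger_mat :: "complex^'n \<Rightarrow> complex^'n \<Rightarrow> complex
    \<Rightarrow> (complex^'n \<Rightarrow> complex^'q^'p) \<Rightarrow> complex^'n \<Rightarrow> complex^'q^'p"
  where "wirtinger_mat a b c M z = (\<chi> i j. wirtinger a b c (\<lambda>w. M w $ i $ j) z)"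

abbreviation wd_mat :: "'n \<Rightarrow> (complex^'n \<Rightarrow> complex^'q^'p) \<Rightarrow> complex^'n \<Rightarrow> complex^'q^'p"
  where "wd_mat j \<equiv> wirtinger_mat (axis j 1) (axis j \<i>) (- \<i>)"

abbreviation wdb_mat :: "'n \<Rightarrow> (complex^'n \<Rightarrow> complex^'q^'p) \<Rightarrow> complex^'n \<Rightarrow> complex^'q^'p"
  where "wdb_mat j \<equiv> wirtinger_mat (axis j 1) (axis j \<i>) \<i>"

lemma wd_mat_entry: "wd_mat j M z $ a $ b = wd j (\<lambda>w. M w $ a $ b) z"
  by (simp add: wirtinger_mat_def wd_eq_wirtinger)

lemma wdb_mat_entry: "wdb_mat j M z $ a $ b = wdb j (\<lambda>w. M w $ a $ b) z"
  by (simp add: wirtinger_mat_def wdb_eq_wirtinger)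

lemma wirtinger_mat_const: "wirtinger_mat a b c (\<lambda>w. K) z = 0"
  by (simp add: wirtinger_mat_def wirtinger_const vec_eq_iff)

lemma wirtinger_mat_cong:
  assumes "open U" "z \<in> U" "\<And>w. w \<in> U \<Longrightarrow> M w = N w"
  shows "wirtinger_mat a b c M z = wirtinger_mat a b c N z"
proof -
  have "wirtinger a b c (\<lambda>w. M w $ i $ j) z = wirtinger a b c (\<lambda>w. N w $ i $ j) z" for i j
    by (rule wirtinger_cong[OF assms(1,2)]) (simp add: assms(3))
  then show ?thesis by (simp add: wirtinger_mat_def)
qed

lemma wirtinger_mat_diff:
  assumes "mat_differentiable M z" "mat_differentiable N z"
  shows "wirtinger_mat a b c (\<lambda>w. M w - N w) z = wirtinger_mat a b c M z - wirtinger_mat a b c N z"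
  using assms by (simp add: wirtinger_mat_def mat_differentiable_def wirtinger_diff vec_eq_iff)

lemma wirtinger_mat_mult:
  assumes "mat_differentiable M z" "mat_differentiable N z"
  shows "wirtinger_mat a b c (\<lambda>w. M w ** N w) z
    = wirtinger_mat a b c M z ** N z + M z ** wirtinger_mat a b c N z"
proof -
  have "wirtinger a b c (\<lambda>w. \<Sum>k\<in>UNIV. M w $ i $ k * N w $ k $ j) z
      = (\<Sum>k\<in>UNIV. wirtinger a b c (\<lambda>w. M w $ i $ k) z * N z $ k $ j
                 + M z $ i $ k * wirtinger a b c (\<lambda>w. N w $ k $ j) z)" for i j
    using assms unfolding mat_differentiable_def
    by (subst wirtinger_sum) (auto intro!: sum.cong wirtinger_mult)
  then show ?thesis
    by (simp add: vec_eq_iff wirtinger_mat_def matrix_mul_entry sum.distrib)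
qed

lemma wirtinger_trace:
  assumes "mat_differentiable M z"
  shows "wirtinger a b c (\<lambda>w. trace (M w)) z = trace (wirtinger_mat a b c M z)"
  using assms unfolding trace_def mat_differentiable_def
  by (subst wirtinger_sum) (auto simp: wirtinger_mat_def)

lemma wirtinger_mat_inverse:
  fixes M :: "complex^'n \<Rightarrow> complex^'m^'m"
  assumes "open U" "z \<in> U" "\<And>w. w \<in> U \<Longrightarrow> invertible (M w)" "mat_differentiable M z"
  shows "wirtinger_mat a b c (\<lambda>w. matrix_inv (M w)) z
    = - (matrix_inv (M z) ** wirtinger_mat a b c M z ** matrix_inv (M z))"
proof -
  let ?Mi = "matrix_inv (M z)" and ?D = "wirtinger_mat a b c (\<lambda>w. matrix_inv (M w)) z"
  have "?D ** M z + ?Mi ** wirtinger_mat a b c M z = wirtinger_mat a b c (\<lambda>w. matrix_inv (M w) ** M w) z"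
    by (rule wirtinger_mat_mult[OF mat_differentiable_inverse[OF assms] assms(4), symmetric])
  also have "\<dots> = wirtinger_mat a b c (\<lambda>w. mat 1) z"
    by (rule wirtinger_mat_cong[OF assms(1,2)]) (simp add: assms(3) matrix_inv_left)
  finally have DM: "?D ** M z = - (?Mi ** wirtinger_mat a b c M z)"
    by (simp add: wirtinger_mat_const eq_neg_iff_add_eq_0)
  have "?D = ?D ** (M z ** ?Mi)"
    using assms(2,3) by (simp add: matrix_inv_right)
  also have "\<dots> = - (?Mi ** wirtinger_mat a b c M z) ** ?Mi"
    by (simp only: matrix_mul_assoc DM)
  finally show ?thesis
    by (simp add: matrix_mul_minus_left)
qed

lemma wirtinger_mat_inverse_mult:
  fixes A :: "complex^'n \<Rightarrow> complex^'m^'m" and G :: "complex^'n \<Rightarrow> complex^'q^'m"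
  assumes "open U" "z \<in> U" "\<And>w. w \<in> U \<Longrightarrow> invertible (A w)"
    and "mat_differentiable A z" "mat_differentiable G z"
  shows "wirtinger_mat a b c (\<lambda>w. matrix_inv (A w) ** G w) z
    = matrix_inv (A z) ** wirtinger_mat a b c G z
      - matrix_inv (A z) ** wirtinger_mat a b c A z ** matrix_inv (A z) ** G z"
proof -
  have inv: "mat_differentiable (\<lambda>w. matrix_inv (A w)) z"
    by (rule mat_differentiable_inverse[OF assms(1-4)])
  show ?thesis
    by (simp add: wirtinger_mat_mult[OF inv assms(5)] wirtinger_mat_inverse[OF assms(1-4)]
        matrix_mul_minus_left)
qed

section \<open>Chern connection and curvature in matrix form\<close>

definition C2_mat_on :: "(complex^'n) set \<Rightarrow> (complex^'n \<Rightarrow> complex^'q^'p) \<Rightarrow> bool"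
  where "C2_mat_on U M \<longleftrightarrow> (\<forall>i j. C2_on U (\<lambda>w. M w $ i $ j))"

lemma C2_mat_on_mat_differentiable: "C2_mat_on U M \<Longrightarrow> w \<in> U \<Longrightarrow> mat_differentiable M w"
  unfolding C2_mat_on_def C2_on_def mat_differentiable_def differentiable_def by blast

lemma C2_mat_on_wirtinger_mat_differentiable:
  "C2_mat_on U M \<Longrightarrow> open U \<Longrightarrow> w \<in> U \<Longrightarrow> mat_differentiable (wirtinger_mat a b c M) w"
  unfolding C2_mat_on_def mat_differentiable_def wirtinger_mat_def
  by (auto intro: wirtinger_differentiable)

lemma wirtinger_mat_commute:
  "C2_mat_on U M \<Longrightarrow> open U \<Longrightarrow> z \<in> U \<Longrightarrow>
    wirtinger_mat a b c (wirtinger_mat a' b' c' M) z = wirtinger_mat a' b' c' (wirtinger_mat a b c M) z"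
  unfolding C2_mat_on_def wirtinger_mat_def vec_eq_iff by (auto intro: wirtinger_commute)

lemma chr_eq_matrix: "chr M p j q w = (matrix_inv (M w) ** wd_mat j M w) $ p $ q"
  by (simp add: chr_def ginv_def matrix_mul_entry wd_mat_entry)

text \<open>\<open>curv_mat M p q = - \<partial>'\<^sub>p (M\<inverse> \<partial>\<^sub>q M)\<close>, whose \<open>(\<alpha>, j)\<close> entry is \<open>R\<^sub>p\<^sub>q\<^sup>\<alpha>\<^sub>j\<close>.\<close>

definition curv_mat :: "(complex^'n \<Rightarrow> complex^'n^'n) \<Rightarrow> 'n \<Rightarrow> 'n \<Rightarrow> complex^'n \<Rightarrow> complex^'n^'n"
  where "curv_mat M p q z = matrix_inv (M z) **
    (wdb_mat p M z ** matrix_inv (M z) ** wd_mat q M z - wd_mat q (wdb_mat p M) z)"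

context
  fixes U :: "(complex^'n) set" and M :: "complex^'n \<Rightarrow> complex^'n^'n"
  assumes U: "open U" and M_C2: "C2_mat_on U M" and M_inv: "\<And>w. w \<in> U \<Longrightarrow> invertible (M w)"
begin

lemma curv_eq_curv_mat:
  assumes "z \<in> U"
  shows "curv M k j p q z = curv_mat M k j z $ p $ q"
proof -
  have "curv M k j p q z = - wdb_mat k (\<lambda>w. matrix_inv (M w) ** wd_mat j M w) z $ p $ q"
    by (simp add: curv_def chr_eq_matrix wdb_mat_entry)
  also have "wdb_mat k (\<lambda>w. matrix_inv (M w) ** wd_mat j M w) z
      = matrix_inv (M z) ** wdb_mat k (wd_mat j M) z
        - matrix_inv (M z) ** wdb_mat k M z ** matrix_inv (M z) ** wd_mat j M z"
    by (rule wirtinger_mat_inverse_mult[OF U assms M_inv C2_mat_on_mat_differentiable[OF M_C2 assms]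
          C2_mat_on_wirtinger_mat_differentiable[OF M_C2 U assms]])
  finally show ?thesis
    by (simp add: curv_mat_def wirtinger_mat_commute[OF M_C2 U assms] matrix_diff_ldistrib
        matrix_mul_assoc)
qed

lemma ricci2_eq_curv_mat:
  assumes "z \<in> U"
  shows "ricci2 M p q z
    = (\<Sum>j\<in>UNIV. \<Sum>k\<in>UNIV. matrix_inv (M z) $ j $ k * (M z ** curv_mat M k j z) $ p $ q)"
proof -
  have "ricci2 M p q z = (\<Sum>l\<in>UNIV. \<Sum>j\<in>UNIV. \<Sum>k\<in>UNIV.
      M z $ p $ l * matrix_inv (M z) $ j $ k * curv_mat M k j z $ l $ q)"
    by (simp add: ricci2_def ginv_def curv_eq_curv_mat[OF assms])
  also have "\<dots> = (\<Sum>j\<in>UNIV. \<Sum>k\<in>UNIV. \<Sum>l\<in>UNIV.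
      M z $ p $ l * matrix_inv (M z) $ j $ k * curv_mat M k j z $ l $ q)"
    by (rule trans[OF sum.swap], rule sum.cong[OF refl], rule sum.swap)
  finally show ?thesis
    by (simp add: matrix_mul_entry sum_distrib_left mult_ac)
qed

end

section \<open>The Laplacian of the trace\<close>

text \<open>The pointwise identity of the header for fixed \<open>q, p\<close>, with \<open>h = Ai G\<close>; the second
  trace on the left is \<open>\<partial>\<^sub>q \<partial>'\<^sub>p h\<close> expanded by the product rule.\<close>

lemma trace_curv_identity:
  fixes A Ai G Gi DA BA DG BG DBA DBG :: "'a::field^'n^'n"
  assumes A: "A ** Ai = mat 1" "Ai ** A = mat 1" and G: "G ** Gi = mat 1" "Gi ** G = mat 1"
  shows "trace (Ai ** G ** (Gi ** (BG ** Gi ** DG - DBG)))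
       + trace (Ai ** DBG - Ai ** DA ** Ai ** BG - Ai ** BA ** Ai ** DG - Ai ** DBA ** Ai ** G
                + Ai ** DA ** Ai ** BA ** Ai ** G + Ai ** BA ** Ai ** DA ** Ai ** G)
     = trace (Gi ** A ** (Ai ** DG - Ai ** G ** Ai ** DA) ** (Ai ** BG - Ai ** BA ** Ai ** G))
       + trace (Ai ** (BA ** Ai ** DA - DBA) ** (Ai ** G))"
proof -
  have cancel: "A ** (Ai ** X) = X" "Ai ** (A ** X) = X" "G ** (Gi ** X) = X" "Gi ** (G ** X) = X"
    for X :: "'a^'n^'n"
    using A G by (simp_all add: matrix_mul_assoc)
  have cyclic1: "trace (Ai ** (BG ** (Gi ** DG))) = trace (Gi ** (DG ** (Ai ** BG)))"
    using trace_mul_sym[of "Ai ** BG" "Gi ** DG"] by (simp add: matrix_mul_assoc)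
  have cyclic2: "trace (Gi ** (DG ** (Ai ** (BA ** (Ai ** G))))) = trace (Ai ** (BA ** (Ai ** DG)))"
  proof -
    have "trace (Gi ** (DG ** (Ai ** (BA ** (Ai ** G))))) = trace ((Gi ** (DG ** (Ai ** (BA ** Ai)))) ** G)"
      by (simp add: matrix_mul_assoc)
    also have "\<dots> = trace (G ** (Gi ** (DG ** (Ai ** (BA ** Ai)))))"
      by (rule trace_mul_sym)
    also have "\<dots> = trace ((Ai ** (BA ** Ai)) ** DG)"
      unfolding cancel by (rule trace_mul_sym)
    finally show ?thesis by (simp add: matrix_mul_assoc)
  qed
  show ?thesis
    by (simp add: matrix_add_ldistrib matrix_add_rdistrib matrix_diff_ldistrib matrix_diff_rdistrib
        matrix_mul_assoc[symmetric] trace_add trace_sub cancel cyclic1 cyclic2 algebra_simps)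
qed

lemma sum_swap_pairs:
  "(\<Sum>i\<in>I. \<Sum>j\<in>J. \<Sum>k\<in>K. \<Sum>l\<in>L. f i j k l) = (\<Sum>k\<in>K. \<Sum>l\<in>L. \<Sum>i\<in>I. \<Sum>j\<in>J. f i j k l)"
proof -
  have "(\<Sum>i\<in>I. \<Sum>j\<in>J. \<Sum>k\<in>K. \<Sum>l\<in>L. f i j k l) = (\<Sum>i\<in>I. \<Sum>k\<in>K. \<Sum>l\<in>L. \<Sum>j\<in>J. f i j k l)"
    by (intro sum.cong refl) (subst sum.swap, intro sum.cong refl sum.swap)
  also have "\<dots> = (\<Sum>k\<in>K. \<Sum>l\<in>L. \<Sum>i\<in>I. \<Sum>j\<in>J. f i j k l)"
    by (subst sum.swap, intro sum.cong refl sum.swap)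
  finally show ?thesis .
qed

context
  fixes U :: "(complex^'n) set" and A G :: "complex^'n \<Rightarrow> complex^'n^'n"
  assumes U: "open U"
    and A_C2: "C2_mat_on U A" and A_inv: "\<And>w. w \<in> U \<Longrightarrow> invertible (A w)"
    and G_C2: "C2_mat_on U G" and G_inv: "\<And>w. w \<in> U \<Longrightarrow> invertible (G w)"
begin

lemma mat_differentiable_inverse_mult:
  "z \<in> U \<Longrightarrow> mat_differentiable (\<lambda>w. matrix_inv (A w) ** G w) z"
  by (intro mat_differentiable_mult mat_differentiable_inverse[OF U _ A_inv]
      C2_mat_on_mat_differentiable[OF A_C2] C2_mat_on_mat_differentiable[OF G_C2])

lemma wirtinger_mat_inverse_mult_on:
  "z \<in> U \<Longrightarrow> wirtinger_mat a b c (\<lambda>w. matrix_inv (A w) ** G w) z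
    = matrix_inv (A z) ** wirtinger_mat a b c G z
      - matrix_inv (A z) ** wirtinger_mat a b c A z ** matrix_inv (A z) ** G z"
  by (rule wirtinger_mat_inverse_mult[OF U _ A_inv C2_mat_on_mat_differentiable[OF A_C2]
        C2_mat_on_mat_differentiable[OF G_C2]])

lemma mat_differentiable_factors:
  assumes "z \<in> U"
  shows "mat_differentiable (\<lambda>w. matrix_inv (A w)) z" "mat_differentiable A z" "mat_differentiable G z"
    "mat_differentiable (wirtinger_mat a b c A) z" "mat_differentiable (wirtinger_mat a b c G) z"
  using assms U A_inv A_C2 G_C2
  by (auto intro: mat_differentiable_inverse C2_mat_on_mat_differentiable
      C2_mat_on_wirtinger_mat_differentiable)

lemma mat_differentiable_wirtinger_mat_inverse_mult:
  assumes "z \<in> U"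
  shows "mat_differentiable (wirtinger_mat a b c (\<lambda>w. matrix_inv (A w) ** G w)) z"
proof (rule mat_differentiable_cong[OF U assms])
  show "matrix_inv (A w) ** wirtinger_mat a b c G w
      - matrix_inv (A w) ** wirtinger_mat a b c A w ** matrix_inv (A w) ** G w
      = wirtinger_mat a b c (\<lambda>w. matrix_inv (A w) ** G w) w" if "w \<in> U" for w
    by (rule wirtinger_mat_inverse_mult_on[OF that, symmetric])
  show "mat_differentiable (\<lambda>w. matrix_inv (A w) ** wirtinger_mat a b c G w
      - matrix_inv (A w) ** wirtinger_mat a b c A w ** matrix_inv (A w) ** G w) z"
    using mat_differentiable_factors[OF assms]
    by (intro mat_differentiable_diff mat_differentiable_mult) auto
qed

lemma wirtinger_mat_inverse_mult_second:
  assumes "z \<in> U"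
  defines "Ai \<equiv> matrix_inv (A z)"
  shows "wirtinger_mat a b c (wirtinger_mat a' b' c' (\<lambda>w. matrix_inv (A w) ** G w)) z
    = Ai ** wirtinger_mat a b c (wirtinger_mat a' b' c' G) z
      - Ai ** wirtinger_mat a b c A z ** Ai ** wirtinger_mat a' b' c' G z
      - Ai ** wirtinger_mat a' b' c' A z ** Ai ** wirtinger_mat a b c G z
      - Ai ** wirtinger_mat a b c (wirtinger_mat a' b' c' A) z ** Ai ** G z
      + Ai ** wirtinger_mat a b c A z ** Ai ** wirtinger_mat a' b' c' A z ** Ai ** G z
      + Ai ** wirtinger_mat a' b' c' A z ** Ai ** wirtinger_mat a b c A z ** Ai ** G z"
    (is "_ = ?rhs")
proof -
  have "wirtinger_mat a b c (wirtinger_mat a' b' c' (\<lambda>w. matrix_inv (A w) ** G w)) z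
      = wirtinger_mat a b c (\<lambda>w. matrix_inv (A w) ** wirtinger_mat a' b' c' G w
          - matrix_inv (A w) ** wirtinger_mat a' b' c' A w ** matrix_inv (A w) ** G w) z"
    by (rule wirtinger_mat_cong[OF U assms(1) wirtinger_mat_inverse_mult_on])
  also have "\<dots> = ?rhs"
    using mat_differentiable_factors[OF assms(1)]
    by (simp add: Ai_def wirtinger_mat_diff wirtinger_mat_mult mat_differentiable_diff
        mat_differentiable_mult wirtinger_mat_inverse[OF U assms(1) A_inv] matrix_add_rdistrib
        matrix_diff_ldistrib matrix_diff_rdistrib matrix_mul_minus_left matrix_mul_minus_right
        matrix_mul_assoc algebra_simps)
  finally show ?thesis .
qed

lemma nabla_end_eq:
  assumes "z \<in> U"
  shows "nabla_end A (\<lambda>w. matrix_inv (A w) ** G w) q m j z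
    = (matrix_inv (A z) ** wd_mat q G z
       - matrix_inv (A z) ** G z ** matrix_inv (A z) ** wd_mat q A z) $ m $ j"
proof -
  let ?Ai = "matrix_inv (A z)"
  have "wd q (\<lambda>w. (matrix_inv (A w) ** G w) $ m $ j) z
      = (?Ai ** wd_mat q G z - ?Ai ** wd_mat q A z ** ?Ai ** G z) $ m $ j"
    by (simp add: wd_mat_entry[symmetric] wirtinger_mat_inverse_mult_on[OF assms])
  moreover have "(\<Sum>r\<in>UNIV. chr A m q r z * (?Ai ** G z) $ r $ j)
      = (?Ai ** wd_mat q A z ** (?Ai ** G z)) $ m $ j"
    unfolding chr_eq_matrix by (rule matrix_mul_entry[symmetric])
  moreover have "(\<Sum>r\<in>UNIV. chr A r q j z * (?Ai ** G z) $ m $ r)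
      = (?Ai ** G z ** (?Ai ** wd_mat q A z)) $ m $ j"
    unfolding chr_eq_matrix matrix_mul_entry[of "?Ai ** G z"] by (simp add: mult.commute)
  ultimately show ?thesis
    by (simp add: nabla_end_def matrix_mul_assoc)
qed

lemma nablabar_end_eq:
  assumes "z \<in> U"
  shows "nablabar_end (\<lambda>w. matrix_inv (A w) ** G w) p j g z
    = (matrix_inv (A z) ** wdb_mat p G z
       - matrix_inv (A z) ** wdb_mat p A z ** matrix_inv (A z) ** G z) $ j $ g"
  by (simp add: nablabar_end_def wdb_mat_entry[symmetric] wirtinger_mat_inverse_mult_on[OF assms])

lemma lap_trace_eq:
  assumes "z \<in> U"
  shows "lap G (\<lambda>w. trace (matrix_inv (A w) ** G w)) z = (\<Sum>q\<in>UNIV. \<Sum>p\<in>UNIV.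
     ginv G z $ q $ p * trace (wd_mat q (wdb_mat p (\<lambda>w. matrix_inv (A w) ** G w)) z))"
proof -
  have "wd q (\<lambda>w. wdb p (\<lambda>w. trace (matrix_inv (A w) ** G w)) w) z
      = wd q (\<lambda>w. trace (wdb_mat p (\<lambda>w. matrix_inv (A w) ** G w) w)) z" for q p
    unfolding wd_eq_wirtinger wdb_eq_wirtinger
    by (rule wirtinger_cong[OF U assms]) (simp add: wirtinger_trace mat_differentiable_inverse_mult)
  also have "\<dots> q p = trace (wd_mat q (wdb_mat p (\<lambda>w. matrix_inv (A w) ** G w)) z)" for q p
    unfolding wd_eq_wirtinger
    by (rule wirtinger_trace[OF mat_differentiable_wirtinger_mat_inverse_mult[OF assms]])
  finally show ?thesis
    by (simp add: lap_def)
qed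

lemma trace_ricci2_eq:
  assumes "z \<in> U"
  shows "(\<Sum>j\<in>UNIV. \<Sum>k\<in>UNIV. ginv A z $ j $ k * ricci2 G k j z)
    = (\<Sum>q\<in>UNIV. \<Sum>p\<in>UNIV. ginv G z $ q $ p * trace (matrix_inv (A z) ** G z ** curv_mat G p q z))"
proof -
  have "(\<Sum>j\<in>UNIV. \<Sum>k\<in>UNIV. ginv A z $ j $ k * ricci2 G k j z)
      = (\<Sum>j\<in>UNIV. \<Sum>k\<in>UNIV. \<Sum>q\<in>UNIV. \<Sum>p\<in>UNIV.
          ginv G z $ q $ p * (matrix_inv (A z) $ j $ k * (G z ** curv_mat G p q z) $ k $ j))"
    by (simp add: ricci2_eq_curv_mat[OF U G_C2 G_inv assms] ginv_def sum_distrib_left mult_ac)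
  also have "\<dots> = (\<Sum>q\<in>UNIV. \<Sum>p\<in>UNIV. \<Sum>j\<in>UNIV. \<Sum>k\<in>UNIV.
          ginv G z $ q $ p * (matrix_inv (A z) $ j $ k * (G z ** curv_mat G p q z) $ k $ j))"
    by (rule sum_swap_pairs)
  finally show ?thesis
    by (simp add: trace_matrix_mul sum_distrib_left flip: matrix_mul_assoc)
qed

lemma nabla_sum_eq:
  assumes "z \<in> U"
  shows "(\<Sum>q\<in>UNIV. \<Sum>p\<in>UNIV. \<Sum>\<gamma>\<in>UNIV. \<Sum>\<mu>\<in>UNIV. \<Sum>j\<in>UNIV.
      ginv G z $ q $ p * matrix_inv (matrix_inv (A z) ** G z) $ \<gamma> $ \<mu>
      * nabla_end A (\<lambda>w. matrix_inv (A w) ** G w) q \<mu> j z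
      * nablabar_end (\<lambda>w. matrix_inv (A w) ** G w) p j \<gamma> z)
    = (\<Sum>q\<in>UNIV. \<Sum>p\<in>UNIV. ginv G z $ q $ p * trace (matrix_inv (G z) ** A z
        ** (matrix_inv (A z) ** wd_mat q G z
            - matrix_inv (A z) ** G z ** matrix_inv (A z) ** wd_mat q A z)
        ** (matrix_inv (A z) ** wdb_mat p G z
            - matrix_inv (A z) ** wdb_mat p A z ** matrix_inv (A z) ** G z)))"
proof -
  have "matrix_inv (A z) ** G z ** (matrix_inv (G z) ** A z)
      = matrix_inv (A z) ** ((G z ** matrix_inv (G z)) ** A z)"
    by (simp add: matrix_mul_assoc)
  also have "\<dots> = mat 1"
    using A_inv[OF assms] G_inv[OF assms] by (simp add: matrix_inv_right matrix_inv_left)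
  finally have "matrix_inv (matrix_inv (A z) ** G z) = matrix_inv (G z) ** A z"
    by (rule matrix_inv_unique)
  then show ?thesis
    by (simp add: nabla_end_eq[OF assms] nablabar_end_eq[OF assms] trace_matrix_mul3 ginv_def
        sum_distrib_left mult_ac)
qed

lemma curv_sum_eq:
  assumes "z \<in> U"
  shows "(\<Sum>q\<in>UNIV. \<Sum>p\<in>UNIV. \<Sum>\<alpha>\<in>UNIV. \<Sum>j\<in>UNIV.
      ginv G z $ q $ p * curv A p q \<alpha> j z * (matrix_inv (A z) ** G z) $ j $ \<alpha>)
    = (\<Sum>q\<in>UNIV. \<Sum>p\<in>UNIV. ginv G z $ q $ p * trace (curv_mat A p q z ** (matrix_inv (A z) ** G z)))"
  by (simp add: curv_eq_curv_mat[OF U A_C2 A_inv assms] trace_matrix_mul sum_distrib_left mult_ac)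

lemma ricci2_lap_trace_identity:
  assumes "z \<in> U"
  shows "- (\<Sum>j\<in>UNIV. \<Sum>k\<in>UNIV. ginv A z $ j $ k * ricci2 G k j z)
       - lap G (\<lambda>w. trace (matrix_inv (A w) ** G w)) z
     = - (\<Sum>q\<in>UNIV. \<Sum>p\<in>UNIV. \<Sum>\<gamma>\<in>UNIV. \<Sum>\<mu>\<in>UNIV. \<Sum>j\<in>UNIV.
            ginv G z $ q $ p * matrix_inv (matrix_inv (A z) ** G z) $ \<gamma> $ \<mu>
            * nabla_end A (\<lambda>w. matrix_inv (A w) ** G w) q \<mu> j z
            * nablabar_end (\<lambda>w. matrix_inv (A w) ** G w) p j \<gamma> z)
       - (\<Sum>q\<in>UNIV. \<Sum>p\<in>UNIV. \<Sum>\<alpha>\<in>UNIV. \<Sum>j\<in>UNIV.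
            ginv G z $ q $ p * curv A p q \<alpha> j z * (matrix_inv (A z) ** G z) $ j $ \<alpha>)"
proof -
  let ?Ai = "matrix_inv (A z)" and ?h = "matrix_inv (A z) ** G z"
  have pointwise: "trace (?h ** curv_mat G p q z)
        + trace (wd_mat q (wdb_mat p (\<lambda>w. matrix_inv (A w) ** G w)) z)
      = trace (matrix_inv (G z) ** A z
          ** (?Ai ** wd_mat q G z - ?Ai ** G z ** ?Ai ** wd_mat q A z)
          ** (?Ai ** wdb_mat p G z - ?Ai ** wdb_mat p A z ** ?Ai ** G z))
        + trace (curv_mat A p q z ** ?h)" for q p
    unfolding curv_mat_def wirtinger_mat_inverse_mult_second[OF assms]
    using A_inv[OF assms] G_inv[OF assms]
    by (intro trace_curv_identity) (simp_all add: matrix_inv_left matrix_inv_right)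
  have contract: "(\<Sum>q\<in>UNIV. \<Sum>p\<in>UNIV. c q p * X q p) + (\<Sum>q\<in>UNIV. \<Sum>p\<in>UNIV. c q p * Y q p)
      = (\<Sum>q\<in>UNIV. \<Sum>p\<in>UNIV. c q p * Z q p) + (\<Sum>q\<in>UNIV. \<Sum>p\<in>UNIV. c q p * W q p)"
    if "\<And>q p. X q p + Y q p = Z q p + W q p" for c X Y Z W :: "'n \<Rightarrow> 'n \<Rightarrow> complex"
    using that by (simp add: sum.distrib[symmetric] distrib_left[symmetric])
  show ?thesis
    unfolding trace_ricci2_eq[OF assms] lap_trace_eq[OF assms] nabla_sum_eq[OF assms]
      curv_sum_eq[OF assms]
    using contract[OF pointwise, of "\<lambda>q p. ginv G z $ q $ p"] by (simp add: algebra_simps)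
qed

end

section \<open>Smooth families and the time derivative\<close>

lemma smooth_onD:
  assumes "smooth_on S f"
  shows "\<And>x. x \<in> S \<Longrightarrow> (f has_derivative frechet_derivative f (at x within S)) (at x within S)"
    and "smooth_on S (\<lambda>x. frechet_derivative f (at x within S) v)"
  using assms by (auto elim: smooth_on.cases simp: frechet_derivative_works)

lemma smooth_on_continuous_on: "smooth_on S f \<Longrightarrow> continuous_on S f"
  unfolding continuous_on_eq_continuous_within
  by (blast dest: smooth_onD(1) has_derivative_continuous)

lemma has_derivative_mat_entry:
  "(M has_derivative M') F \<Longrightarrow> ((\<lambda>x. M x $ i $ j) has_derivative (\<lambda>h. M' h $ i $ j)) F"
  by (rule bounded_linear.has_derivative[OF bounded_linear_vec_nth,
        OF bounded_linear.has_derivative[OF bounded_linear_vec_nth]])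

lemma has_derivative_slice:
  fixes F :: "real \<times> 'a::real_normed_vector \<Rightarrow> 'b::real_normed_vector"
  assumes "(F has_derivative F') (at (t, w) within T \<times> U)" "open U" "w \<in> U" "t \<in> T"
  shows "((\<lambda>w. F (t, w)) has_derivative (\<lambda>u. F' (0, u))) (at w)"
proof -
  have "((\<lambda>w. (t, w)) has_derivative (\<lambda>u. (0, u))) (at w within U)"
    by (auto intro!: derivative_eq_intros)
  moreover have "(F has_derivative F') (at (t, w) within (\<lambda>w. (t, w)) ` U)"
    by (rule has_derivative_subset[OF assms(1)]) (use assms(4) in auto)
  ultimately have "((F \<circ> (\<lambda>w. (t, w))) has_derivative (F' \<circ> (\<lambda>u. (0, u)))) (at w within U)"
    by (rule diff_chain_within)
  then have "((\<lambda>w. F (t, w)) has_derivative (\<lambda>u. F' (0, u))) (at w within U)"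
    by (simp add: o_def)
  then show ?thesis using at_within_open[OF assms(3,2)] by simp
qed

lemma smooth_on_slice_C2_mat_on:
  fixes g :: "real \<Rightarrow> complex^'n \<Rightarrow> complex^'q^'p"
  assumes smooth: "smooth_on (T \<times> U) (\<lambda>(t, z). g t z)" and U: "open U" and t: "t \<in> T"
  shows "C2_mat_on U (g t)"
proof -
  define F where "F = (\<lambda>(t, z). g t z)"
  define D where "D x = frechet_derivative F (at x within T \<times> U)" for x
  define D2 where "D2 v x = frechet_derivative (\<lambda>x. D x v) (at x within T \<times> U)" for v x
  have D: "(F has_derivative D x) (at x within T \<times> U)" if "x \<in> T \<times> U" for x
    using smooth_onD(1)[OF smooth that] unfolding D_def F_def .
  have D_smooth: "smooth_on (T \<times> U) (\<lambda>x. D x v)" for v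
    using smooth_onD(2)[OF smooth] unfolding D_def F_def .
  have D2: "((\<lambda>x. D x v) has_derivative D2 v x) (at x within T \<times> U)" if "x \<in> T \<times> U" for x v
    using smooth_onD(1)[OF D_smooth that] unfolding D2_def .
  have D2_cont: "continuous_on (T \<times> U) (\<lambda>x. D2 v x v')" for v v'
    using smooth_on_continuous_on[OF smooth_onD(2)[OF D_smooth]] unfolding D2_def .
  show ?thesis
    unfolding C2_mat_on_def C2_on_def
  proof (intro allI exI conjI ballI)
    fix i j w u assume w: "w \<in> U"
    show "((\<lambda>w. g t w $ i $ j) has_derivative (\<lambda>u. D (t, w) (0, u) $ i $ j)) (at w)"
      using has_derivative_mat_entry[OF has_derivative_slice[OF D U w t]] w t by (simp add: F_def)
    show "((\<lambda>w. D (t, w) (0, u) $ i $ j) has_derivative (\<lambda>v. D2 (0, u) (t, w) (0, v) $ i $ j)) (at w)"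
      using has_derivative_mat_entry[OF has_derivative_slice[OF D2 U w t]] w t by simp
  next
    fix i j u v
    have "continuous_on U (\<lambda>w. D2 (0, u) (t, w) (0, v))"
      by (rule continuous_on_compose2[OF D2_cont]) (use t in \<open>auto intro!: continuous_intros\<close>)
    then show "continuous_on U (\<lambda>w. D2 (0, u) (t, w) (0, v) $ i $ j)"
      by (intro continuous_intros)
  qed
qed

lemma pos_def_herm_invertible:
  assumes "pos_def_herm A"
  shows "invertible A"
proof -
  have "x = 0" if "A *v x = 0" for x
  proof (rule ccontr)
    assume "x \<noteq> 0"
    then have "0 < Re (\<Sum>k\<in>UNIV. \<Sum>j\<in>UNIV. cnj (x $ k) * A $ k $ j * x $ j)"
      using assms unfolding pos_def_herm_def by blast
    also have "(\<Sum>k\<in>UNIV. \<Sum>j\<in>UNIV. cnj (x $ k) * A $ k $ j * x $ j) = (\<Sum>k\<in>UNIV. cnj (x $ k) * (A *v x) $ k)"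
      by (simp add: matrix_vector_mult_def sum_distrib_left mult.assoc)
    finally show False using that by simp
  qed
  then show ?thesis
    unfolding invertible_left_inverse matrix_left_invertible_ker by blast
qed

lemma vector_derivative_trace_mult_left:
  fixes M :: "real \<Rightarrow> complex^'n^'n"
  assumes "a < b" "t \<in> {a..b}"
    and "\<And>i j. ((\<lambda>s. M s $ i $ j) has_vector_derivative M' i j) (at t within {a..b})"
  shows "vector_derivative (\<lambda>s. trace (B ** M s)) (at t within {a..b})
    = (\<Sum>i\<in>UNIV. \<Sum>j\<in>UNIV. B $ i $ j * M' j i)"
proof (rule vector_derivative_within_closed_interval[OF assms(1,2)])
  show "((\<lambda>s. trace (B ** M s)) has_vector_derivative (\<Sum>i\<in>UNIV. \<Sum>j\<in>UNIV. B $ i $ j * M' j i))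
      (at t within {a..b})"
    unfolding trace_matrix_mul
    by (intro has_vector_derivative_sum has_vector_derivative_mult_right assms(3))
qed

theorem proposition1:
  fixes U :: "(complex^'n) set"
    and g :: "real \<Rightarrow> complex^'n \<Rightarrow> complex^'n^'n"
    and t0 :: real
    and \<Phi> :: "complex^'n \<Rightarrow> complex^'n^'n \<Rightarrow> complex^'n^'n"
  assumes U_open: "open U"
    and t0_pos: "0 < t0"
    and g_smooth: "smooth_on ({0..t0} \<times> U) (\<lambda>(t, z). g t z)"
    and g_metric: "\<And>t z. t \<in> {0..t0} \<Longrightarrow> z \<in> U \<Longrightarrow> pos_def_herm (g t z)"
    and \<Phi>_smooth: "smooth_on (U \<times> {A. pos_def_herm (herm_part A)}) (\<lambda>(z, A). \<Phi> z (herm_part A))"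
    and \<Phi>_real: "\<And>z A. z \<in> U \<Longrightarrow> pos_def_herm A \<Longrightarrow> hermitian_mat (\<Phi> z A)"
    and flow: "\<And>t z k j. t \<in> {0..t0} \<Longrightarrow> z \<in> U \<Longrightarrow>
       ((\<lambda>s. g s z $ k $ j) has_vector_derivative
          (- ricci2 (g t) k j z - TT (g t) k j z / 2 - \<Phi> z (g t z) $ k $ j))
         (at t within {0..t0})"
  shows "\<forall>t\<in>{0..t0}. \<forall>z\<in>U.
     (let h = (\<lambda>s w. matrix_inv (g 0 w) ** g s w) in
       vector_derivative (\<lambda>s. trace (h s z)) (at t within {0..t0})
         - lap (g t) (\<lambda>w. trace (h t w)) z
       = - (\<Sum>q\<in>UNIV. \<Sum>p\<in>UNIV. \<Sum>\<gamma>\<in>UNIV. \<Sum>\<mu>\<in>UNIV. \<Sum>j\<in>UNIV.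
              ginv (g t) z $ q $ p * matrix_inv (h t z) $ \<gamma> $ \<mu>
              * nabla_end (g 0) (h t) q \<mu> j z * nablabar_end (h t) p j \<gamma> z)
         - (\<Sum>q\<in>UNIV. \<Sum>p\<in>UNIV. \<Sum>\<alpha>\<in>UNIV. \<Sum>j\<in>UNIV.
              ginv (g t) z $ q $ p * curv (g 0) p q \<alpha> j z * h t z $ j $ \<alpha>)
         - (\<Sum>j\<in>UNIV. \<Sum>k\<in>UNIV. ginv (g 0) z $ j $ k * TT (g t) k j z) / 2
         - (\<Sum>j\<in>UNIV. \<Sum>k\<in>UNIV. ginv (g 0) z $ j $ k * \<Phi> z (g t z) $ k $ j))"
proof (intro ballI, goal_cases)
  \<comment> \<open>The identity is pointwise and \<open>\<Phi>\<close> enters only through \<open>flow\<close>.\<close>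
  case (1 t z)
  then have t: "t \<in> {0..t0}" and z: "z \<in> U" by simp_all
  have C2: "C2_mat_on U (g s)" if "s \<in> {0..t0}" for s
    by (rule smooth_on_slice_C2_mat_on[OF g_smooth U_open that])
  have inv: "invertible (g s w)" if "s \<in> {0..t0}" "w \<in> U" for s w
    by (rule pos_def_herm_invertible[OF g_metric[OF that]])
  have "0 \<in> {0..t0}" using t0_pos by simp
  have time: "vector_derivative (\<lambda>s. trace (matrix_inv (g 0 z) ** g s z)) (at t within {0..t0})
      = - (\<Sum>j\<in>UNIV. \<Sum>k\<in>UNIV. ginv (g 0) z $ j $ k * ricci2 (g t) k j z)
        - (\<Sum>j\<in>UNIV. \<Sum>k\<in>UNIV. ginv (g 0) z $ j $ k * TT (g t) k j z) / 2
        - (\<Sum>j\<in>UNIV. \<Sum>k\<in>UNIV. ginv (g 0) z $ j $ k * \<Phi> z (g t z) $ k $ j)"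
    unfolding vector_derivative_trace_mult_left[OF t0_pos t flow[OF t z]]
    by (simp add: ginv_def algebra_simps sum_subtractf sum_negf sum_divide_distrib sum.distrib)
  have rearrange: "V - L = - N - C - T / 2 - P"
    if "V = - R - T / 2 - P" and "- R - L = - N - C" for V R T P L N C :: complex
    using that by (simp add: algebra_simps)
  show ?case
    unfolding Let_def
    by (rule rearrange[OF time ricci2_lap_trace_identity[OF U_open C2[OF \<open>0 \<in> {0..t0}\<close>]
          inv[OF \<open>0 \<in> {0..t0}\<close>] C2[OF t] inv[OF t] z]])
qed

end
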